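(* For integers $k\ge1$, $l\ge0$, $m\ge1$ define \[ \Psi^k_{l,m}(z)=\sum_{0\le p_1<p_2<\dots<p_k}z^{\,l+m(2^{p_1}+2^{p_2}+\dots+2^{p_k})}\in A(D), \] and $\Psi^0_{l,m}(z)=z^l$. Then \[ \mathcal{T}\Psi^k_{l,m}= \begin{cases} \Psi^k_{\frac l2,\frac m2}, & l,m \text{ even},\\[2pt] \Psi^k_{\frac{3l+1}2,\frac{3m}2}, & l \text{ odd},\ m\text{ even},\\[2pt] \Psi^k_{\frac l2,m}+\Psi^{k-1}_{\frac{3(l+m)+1}2,3m}, & l\text{ even},\ m \text{ odd},\\[2pt] \Psi^k_{\frac{3l+1}2,3m}+\Psi^{k-1}_{\frac{l+m}2,m}, & l,m\text{ odd}. \end{cases} \]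
   Context: $T$ is the Collatz map $T(n)=\frac{3n+1}2$ ($n$ odd), $T(n)=\frac n2$ ($n$ even). $D$ is the open unit disk and $A(D)$ the holomorphic functions on $D$. The operator $\mathcal{T}$ acts on $A(D)$ by $\mathcal{T}\big(\sum_{n\ge0}a_nz^n\big)=\sum_{n\ge0}a_nz^{T(n)}$, i.e. $\mathcal{T}z^n=z^{T(n)}$. Thus $\Psi^k_{l,m}$ is the generating function of $\{l+mN: N$ a nonnegative integer with exactly $k$ ones in its binary expansion$\}$. *)

theory Defs
  imports "HOL-Analysis.Analysis"
begin

definition collatzT :: "nat \<Rightarrow> nat" where
  "collatzT n = (if odd n then (3 * n + 1) div 2 else n div 2)"

definition Top :: "(complex \<Rightarrow> complex) \<Rightarrow> complex \<Rightarrow> complex" where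
  "Top f z = (\<Sum>n. ((deriv ^^ n) f 0 / fact n) * z ^ collatzT n)"

text \<open>Psi^k_{l,m}(z) = sum over 0 <= p_1 < ... < p_k of z^(l + m (2^p_1 + ... + 2^p_k)),
  i.e. summed over the finite sets P of exponents with card P = k; Psi^0_{l,m}(z) = z^l.\<close>
definition Psi :: "nat \<Rightarrow> nat \<Rightarrow> nat \<Rightarrow> complex \<Rightarrow> complex" where
  "Psi k l m z = (if k = 0 then z ^ l
     else (\<Sum>\<^sub>\<infinity>P\<in>{P :: nat set. finite P \<and> card P = k}. z ^ (l + m * (\<Sum>p\<in>P. 2 ^ p))))"

end

theory Submission
  imports Defs "HOL-Library.Nat_Bijection"
begin

text \<open>Via the bijection set_decode between naturals and finite sets of naturals,
  \<open>\<Psi>\<^sup>k\<^sub>l\<^sub>,\<^sub>m\<close> is the power series with coefficients 0 and 1 supported on the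
  numbers l + m N, N ranging over the naturals with k binary ones. Its Taylor coefficients
  at 0 are these 0/1 coefficients, so the Collatz operator acts termwise and yields the sum
  of z^T(l + m N) over the same N. For even m, T(l + m N) is again affine in N, with slope
  m/2 or 3m/2 according to the parity of l. For odd m, one splits N = 2N' (as many ones as
  N') and N = 2N' + 1 (one more one than N'), which leaves the two progressions l + 2m N'
  and (l + m) + 2m N' of even modulus, with k and k - 1 ones respectively.\<close>

definition bit_weight :: "nat \<Rightarrow> nat" where
  "bit_weight N = card (set_decode N)"

lemma bit_weight_double [simp]: "bit_weight (2 * N) = bit_weight N"
proof -
  have "q \<in> set_decode (2 * N) \<longleftrightarrow> q \<in> Suc ` set_decode N" for q
    by (cases q) auto
  then have "set_decode (2 * N) = Suc ` set_decode N"
    by blast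
  then show ?thesis
    by (simp add: bit_weight_def card_image)
qed

lemma bit_weight_Suc_double [simp]: "bit_weight (Suc (2 * N)) = Suc (bit_weight N)"
proof -
  have "q \<in> set_decode (Suc (2 * N)) \<longleftrightarrow> q \<in> insert 0 (Suc ` set_decode N)" for q
    by (cases q) auto
  then have "set_decode (Suc (2 * N)) = insert 0 (Suc ` set_decode N)"
    by blast
  then show ?thesis
    by (simp add: bit_weight_def card_image card_insert_if)
qed

lemma bit_weight_eq_0_iff: "bit_weight N = 0 \<longleftrightarrow> N = 0"
  unfolding bit_weight_def
  by (metis card_0_eq finite_set_decode set_decode_inverse set_decode_zero set_encode_empty)

lemma bit_weight_level_split:
  assumes "k \<ge> 1"
  shows "{N. bit_weight N = k} =
    (\<lambda>N. 2 * N) ` {N. bit_weight N = k} \<union> (\<lambda>N. Suc (2 * N)) ` {N. bit_weight N = k - 1}"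
proof (rule set_eqI, rule iffI)
  fix N assume N: "N \<in> {N. bit_weight N = k}"
  show "N \<in> (\<lambda>N. 2 * N) ` {N. bit_weight N = k} \<union> (\<lambda>N. Suc (2 * N)) ` {N. bit_weight N = k - 1}"
  proof (cases "even N")
    case True
    then have "N = 2 * (N div 2)"
      by simp
    with N show ?thesis
      by (metis (mono_tags) UnI1 bit_weight_double image_eqI mem_Collect_eq)
  next
    case False
    then have "N = Suc (2 * (N div 2))"
      by presburger
    with N show ?thesis
      by (metis (mono_tags) UnI2 bit_weight_Suc_double diff_Suc_1 image_eqI mem_Collect_eq)
  qed
qed (use assms in auto)

lemma has_sum_bit_weight_split:
  fixes g :: "nat \<Rightarrow> 'a::topological_comm_monoid_add"
  assumes "k \<ge> 1"
    and even: "((\<lambda>N. g (2 * N)) has_sum a) {N. bit_weight N = k}"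
    and odd: "((\<lambda>N. g (Suc (2 * N))) has_sum b) {N. bit_weight N = k - 1}"
  shows "(g has_sum (a + b)) {N. bit_weight N = k}"
proof -
  have "inj_on (\<lambda>N::nat. 2 * N) A" "inj_on (\<lambda>N::nat. Suc (2 * N)) A" for A
    by (auto simp: inj_on_def)
  then have "(g has_sum a) ((\<lambda>N. 2 * N) ` {N. bit_weight N = k})"
    and "(g has_sum b) ((\<lambda>N. Suc (2 * N)) ` {N. bit_weight N = k - 1})"
    using even odd by (simp_all add: has_sum_reindex o_def)
  moreover have "(\<lambda>N. 2 * N) ` A \<inter> (\<lambda>N. Suc (2 * N)) ` B = {}" for A B :: "nat set"
    by auto presburger
  ultimately show ?thesis
    using bit_weight_level_split[OF \<open>k \<ge> 1\<close>] by (metis has_sum_Un_disjoint)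
qed

lemma has_sum_suminf_restrict:
  fixes f :: "nat \<Rightarrow> 'a::{banach, real_normed_algebra_1}"
  assumes "summable (\<lambda>n. norm (f n))"
  shows "(f has_sum (\<Sum>n. of_bool (n \<in> S) * f n)) S"
proof -
  let ?g = "\<lambda>n. of_bool (n \<in> S) * f n"
  have "norm (?g n) \<le> norm (f n)" for n
    by (cases "n \<in> S") auto
  then have "summable (\<lambda>n. norm (?g n))"
    by (intro summable_comparison_test[OF _ assms] exI[of _ 0]) simp
  then have "(?g has_sum suminf ?g) UNIV"
    by (metis norm_summable_imp_has_sum summable_norm_cancel summable_sums)
  moreover have "(f has_sum s) S \<longleftrightarrow> (?g has_sum s) UNIV" for s
    by (rule has_sum_cong_neutral) simp_all
  ultimately show ?thesis
    by simp
qed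

lemma has_sum_powers_suminf:
  fixes w :: complex
  assumes "norm w < 1"
  shows "((\<lambda>n. w ^ n) has_sum (\<Sum>n. of_bool (n \<in> S) * w ^ n)) S"
  by (rule has_sum_suminf_restrict) (use assms in \<open>simp add: norm_power summable_geometric\<close>)

lemma taylor_coeff_infsum_powers:
  fixes S :: "nat set"
  shows "(deriv ^^ n) (\<lambda>w::complex. \<Sum>\<^sub>\<infinity>i\<in>S. w ^ i) 0 / fact n = of_bool (n \<in> S)"
proof -
  define F where "F = Abs_fps (\<lambda>i. of_bool (i \<in> S) :: complex)"
  have radius: "conv_radius (fps_nth F) \<ge> 1"
  proof (rule conv_radius_geI_ex')
    fix r :: real assume r: "0 < r" "ereal r < 1"
    show "summable (\<lambda>i. fps_nth F i * of_real r ^ i)"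
      by (rule summable_norm_cancel, rule summable_comparison_test'[OF summable_geometric[of r]])
         (use r in \<open>auto simp: F_def norm_power\<close>)
  qed
  have "fps_conv_radius F > 0"
    unfolding fps_conv_radius_def by (rule less_le_trans[OF _ radius]) simp
  moreover have "eventually (\<lambda>w. eval_fps F w = (\<Sum>\<^sub>\<infinity>i\<in>S. w ^ i)) (nhds 0)"
  proof -
    have "eventually (\<lambda>w. w \<in> ball 0 1) (nhds (0::complex))"
      by (rule eventually_nhds_in_open) simp_all
    then show ?thesis
    proof (rule eventually_mono)
      fix w :: complex assume "w \<in> ball 0 1"
      then have "((\<lambda>i. w ^ i) has_sum eval_fps F w) S"
        using has_sum_powers_suminf[of w S] by (simp add: eval_fps_def F_def)
      then show "eval_fps F w = (\<Sum>\<^sub>\<infinity>i\<in>S. w ^ i)"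
        by (simp add: infsumI)
    qed
  qed
  ultimately have "(\<lambda>w. \<Sum>\<^sub>\<infinity>i\<in>S. w ^ i) has_fps_expansion F"
    by (simp add: has_fps_expansion_def)
  from fps_nth_fps_expansion[OF this, of n] show ?thesis
    by (simp add: F_def)
qed

lemma collatzT_ge_half: "collatzT n \<ge> n div 2"
  unfolding collatzT_def by (auto intro: div_le_mono)

lemma summable_norm_power_collatzT:
  fixes z :: complex
  assumes "norm z < 1"
  shows "summable (\<lambda>n. norm (z ^ collatzT n))"
proof -
  define \<rho> where "\<rho> = sqrt (norm z)"
  have \<rho>: "0 \<le> \<rho>" "\<rho> < 1" "\<rho>\<^sup>2 = norm z"
    using assms by (auto simp: \<rho>_def)
  have bound: "norm (norm (z ^ collatzT n)) \<le> \<rho> ^ (n - 1)" for n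
  proof -
    have "norm (norm (z ^ collatzT n)) = norm z ^ collatzT n"
      by (simp add: norm_power)
    also have "\<dots> \<le> norm z ^ (n div 2)"
      using assms collatzT_ge_half by (intro power_decreasing) auto
    also have "\<dots> = \<rho> ^ (2 * (n div 2))"
      by (simp add: power_mult \<rho>(3))
    also have "\<dots> \<le> \<rho> ^ (n - 1)"
      using \<rho> by (intro power_decreasing) auto
    finally show ?thesis .
  qed
  have "summable (\<lambda>n. \<rho> ^ (n - 1))"
    using summable_Suc_iff[of "\<lambda>n. \<rho> ^ (n - 1)"] \<rho> by (simp add: summable_geometric)
  then show ?thesis
    using bound by (rule summable_comparison_test')
qed

lemma Top_infsum_powers_has_sum:
  fixes z :: complex
  assumes "norm z < 1"
  shows "((\<lambda>n. z ^ collatzT n) has_sum Top (\<lambda>w. \<Sum>\<^sub>\<infinity>i\<in>S. w ^ i) z) S"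
  using has_sum_suminf_restrict[OF summable_norm_power_collatzT[OF assms], of S]
  by (simp add: Top_def taylor_coeff_infsum_powers if_distrib cong: if_cong)

lemma Psi_eq_infsum_bit_weight: "Psi k l m z = (\<Sum>\<^sub>\<infinity>N\<in>{N. bit_weight N = k}. z ^ (l + m * N))"
proof (cases "k = 0")
  case True
  then show ?thesis
    by (simp add: Psi_def bit_weight_eq_0_iff)
next
  case False
  have "{P :: nat set. finite P \<and> card P = k} = set_decode ` {N. bit_weight N = k}"
    by (auto simp: bit_weight_def image_iff) (metis set_encode_inverse)
  moreover have "inj_on set_decode A" for A
    by (metis inj_on_inverseI set_decode_inverse)
  ultimately show ?thesis
    using False by (simp add: Psi_def infsum_reindex o_def set_decode_inverse[unfolded set_encode_def])
qed

lemma Psi_has_sum: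
  fixes z :: complex
  assumes "m \<ge> 1" and "norm z < 1"
  shows "((\<lambda>N. z ^ (l + m * N)) has_sum Psi k l m z) {N. bit_weight N = k}"
proof -
  have inj: "inj_on (\<lambda>N. l + m * N) A" for A
    using assms(1) by (auto simp: inj_on_def)
  have "(\<lambda>n. z ^ n) summable_on UNIV"
    using has_sum_powers_suminf[OF assms(2), of UNIV] by (auto simp: summable_on_def)
  then have "(\<lambda>n. z ^ n) summable_on (\<lambda>N. l + m * N) ` {N. bit_weight N = k}"
    by (rule summable_on_subset_banach) auto
  then show ?thesis
    by (simp add: Psi_eq_infsum_bit_weight summable_on_reindex[OF inj] o_def)
qed

lemma Top_Psi_has_sum:
  fixes z :: complex
  assumes "m \<ge> 1" and "norm z < 1"
  shows "((\<lambda>N. z ^ collatzT (l + m * N)) has_sum Top (Psi k l m) z) {N. bit_weight N = k}"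
proof -
  have inj: "inj_on (\<lambda>N. l + m * N) A" for A
    using assms(1) by (auto simp: inj_on_def)
  have "Psi k l m = (\<lambda>w. \<Sum>\<^sub>\<infinity>n\<in>(\<lambda>N. l + m * N) ` {N. bit_weight N = k}. w ^ n)"
    by (simp add: fun_eq_iff Psi_eq_infsum_bit_weight infsum_reindex[OF inj] o_def)
  then show ?thesis
    using Top_infsum_powers_has_sum[OF assms(2), of "(\<lambda>N. l + m * N) ` {N. bit_weight N = k}"]
    by (simp add: has_sum_reindex[OF inj] o_def)
qed

lemma Top_Psi_eq_Psi:
  fixes z :: complex
  assumes "\<And>N. collatzT (l + m * N) = l' + m' * N"
    and "m \<ge> 1" and "m' \<ge> 1" and "norm z < 1"
  shows "Top (Psi k l m) z = Psi k l' m' z"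
proof -
  have "((\<lambda>N. z ^ (l' + m' * N)) has_sum Top (Psi k l m) z) {N. bit_weight N = k}"
    using Top_Psi_has_sum[OF assms(2,4), of l k] by (simp add: assms(1))
  from this Psi_has_sum[OF assms(3,4)] show ?thesis
    by (rule has_sum_unique)
qed

lemma Top_Psi_eq_Psi_add:
  fixes z :: complex
  assumes "\<And>N. collatzT (l + 2 * m * N) = l\<^sub>0 + m\<^sub>0 * N"
    and "\<And>N. collatzT (l + m + 2 * m * N) = l\<^sub>1 + m\<^sub>1 * N"
    and "k \<ge> 1" and "m \<ge> 1" and "m\<^sub>0 \<ge> 1" and "m\<^sub>1 \<ge> 1" and z: "norm z < 1"
  shows "Top (Psi k l m) z = Psi k l\<^sub>0 m\<^sub>0 z + Psi (k - 1) l\<^sub>1 m\<^sub>1 z"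
proof -
  let ?g = "\<lambda>N. z ^ collatzT (l + m * N)"
  have "?g (2 * N) = z ^ (l\<^sub>0 + m\<^sub>0 * N)" and "?g (Suc (2 * N)) = z ^ (l\<^sub>1 + m\<^sub>1 * N)" for N
    using assms(1,2)[of N] by (simp_all add: algebra_simps)
  then have "((\<lambda>N. ?g (2 * N)) has_sum Psi k l\<^sub>0 m\<^sub>0 z) {N. bit_weight N = k}"
    and "((\<lambda>N. ?g (Suc (2 * N))) has_sum Psi (k - 1) l\<^sub>1 m\<^sub>1 z) {N. bit_weight N = k - 1}"
    using Psi_has_sum[OF \<open>m\<^sub>0 \<ge> 1\<close> z] Psi_has_sum[OF \<open>m\<^sub>1 \<ge> 1\<close> z] by simp_all
  then have "(?g has_sum (Psi k l\<^sub>0 m\<^sub>0 z + Psi (k - 1) l\<^sub>1 m\<^sub>1 z)) {N. bit_weight N = k}"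
    by (rule has_sum_bit_weight_split[OF \<open>k \<ge> 1\<close>])
  with Top_Psi_has_sum[OF \<open>m \<ge> 1\<close> z] show ?thesis
    by (rule has_sum_unique)
qed

lemma collatzT_double_progression:
  "collatzT (l + 2 * m * N) = (if even l then l div 2 + m * N else (3 * l + 1) div 2 + 3 * m * N)"
  by (auto simp: collatzT_def elim!: oddE)

theorem mainTheorem14:
  fixes k l m :: nat and z :: complex
  assumes "k \<ge> 1" and "m \<ge> 1" and "z \<in> ball 0 1"
  shows "Top (Psi k l m) z =
    (if even l \<and> even m then Psi k (l div 2) (m div 2) z
     else if odd l \<and> even m then Psi k ((3 * l + 1) div 2) ((3 * m) div 2) z
     else if even l \<and> odd m then Psi k (l div 2) m z + Psi (k - 1) ((3 * (l + m) + 1) div 2) (3 * m) z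
     else Psi k ((3 * l + 1) div 2) (3 * m) z + Psi (k - 1) ((l + m) div 2) m z)"
proof -
  have z: "norm z < 1"
    using assms(3) by simp
  show ?thesis
  proof (cases "even m")
    case True
    then obtain h where m: "m = 2 * h" ..
    with \<open>m \<ge> 1\<close> have "Top (Psi k l m) z =
        (if even l then Psi k (l div 2) h z else Psi k ((3 * l + 1) div 2) (3 * h) z)"
      using z by (auto intro!: Top_Psi_eq_Psi simp: collatzT_double_progression)
    with m show ?thesis
      by simp
  next
    case False
    then have "Top (Psi k l m) z =
        (if even l then Psi k (l div 2) m z + Psi (k - 1) ((3 * (l + m) + 1) div 2) (3 * m) z
         else Psi k ((3 * l + 1) div 2) (3 * m) z + Psi (k - 1) ((l + m) div 2) m z)"
      using assms(1,2) z
      by (cases "even l"; simp only: if_True if_False; intro Top_Psi_eq_Psi_add)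
         (auto simp: collatzT_double_progression)
    with False show ?thesis
      by simp
  qed
qed

end
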